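(* Every connected finite graph $G=(V,E)$ (parallel edges and self-loops allowed) has the weighted strict Gauss–Lucas property: for every $0<\beta<1$, every legal weight assignment $w$ for $G$, and every collection of complex activities $(z_v)_{v\in V}$ with $|z_v|\ge 1$ for all $v\in V$, we have $\mathcal{D}_G Z_w(G)\neq 0$. Consequently $G$ also has the strict Gauss–Lucas property: under the same conditions on $\beta$ and $(z_v)$, $\mathcal{D}_G Z_I(G,\beta,(z_v)_{v\in V})\ne 0$.
   Context: Graphs may have parallel edges and self-loops; the degree $\deg(v)$ counts edges with multiplicity, a self-loop counting twice, and $d(\sigma)$ counts (with multiplicity) the edges $\{u,v\}$ whose endpoints receive different spins ($\sigma(u)\neq\sigma(v)$). For $\sigma\in\{+,-\}^V$, $0<\beta\le1$ and complex activities $(z_v)_{v\in V}$, the multivariate Ising partition function is $Z_I(G,\beta,(z_v))=\sum_{\sigma\in\{+,-\}^V}\beta^{d(\sigma)}\prod_{v:\sigma(v)=+}z_v$. A weight assignment $w:V\to\mathbb{Z}_{>0}$ is legal if $w(v)\ge\deg(v)$ for all $v$. The weighted partition function is $Z_w(G)=\sum_{\sigma\in\{+,-\}^V}\beta^{d(\sigma)}\prod_{v:\sigma(v)=+}z_v^{w(v)}$, a polynomial in the variables $(z_v)$. The operator $\mathcal{D}_G=\sum_{v\in V}z_v\frac{\partial}{\partial z_v}$. $G$ has the strict Gauss–Lucas property (SGLP) if $\mathcal{D}_GZ_I(G,\beta,(z_v))\neq0$ whenever $0<\beta<1$ and $|z_v|\ge1$ for all $v$; it has the weighted strict Gauss–Lucas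 property (WSGLP) if $\mathcal{D}_GZ_w(G)\ne0$ for every legal $w$ under the same conditions. *)

theory Defs
  imports "HOL-Analysis.Analysis" "HOL-Library.FuncSet"
begin

text \<open>Parallel edges are distinct identifiers
  with the same endpoints; a self-loop is an edge e with fst (ends e) = snd (ends e).
  Spins: True = +, False = -.\<close>

definition multigraph :: "'a set \<Rightarrow> 'e set \<Rightarrow> ('e \<Rightarrow> 'a \<times> 'a) \<Rightarrow> bool" where
  "multigraph V E ends \<longleftrightarrow> finite V \<and> finite E \<and>
     (\<forall>e\<in>E. fst (ends e) \<in> V \<and> snd (ends e) \<in> V)"

definition adj :: "'e set \<Rightarrow> ('e \<Rightarrow> 'a \<times> 'a) \<Rightarrow> 'a \<Rightarrow> 'a \<Rightarrow> bool" where
  "adj E ends x y \<longleftrightarrow> (\<exists>e\<in>E. ends e = (x, y) \<or> ends e = (y, x))"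

definition connected_graph :: "'a set \<Rightarrow> 'e set \<Rightarrow> ('e \<Rightarrow> 'a \<times> 'a) \<Rightarrow> bool" where
  "connected_graph V E ends \<longleftrightarrow> V \<noteq> {} \<and>
     (\<forall>u\<in>V. \<forall>v\<in>V. (adj E ends)\<^sup>*\<^sup>* u v)"

text \<open>Degree with multiplicity; a self-loop counts twice.\<close>
definition deg :: "'e set \<Rightarrow> ('e \<Rightarrow> 'a \<times> 'a) \<Rightarrow> 'a \<Rightarrow> nat" where
  "deg E ends v = (\<Sum>e\<in>E. (if fst (ends e) = v then 1 else 0) + (if snd (ends e) = v then 1 else 0))"

definition dcut :: "'e set \<Rightarrow> ('e \<Rightarrow> 'a \<times> 'a) \<Rightarrow> ('a \<Rightarrow> bool) \<Rightarrow> nat" where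
  "dcut E ends \<sigma> = card {e\<in>E. \<sigma> (fst (ends e)) \<noteq> \<sigma> (snd (ends e))}"

definition spins :: "'a set \<Rightarrow> ('a \<Rightarrow> bool) set" where
  "spins V = V \<rightarrow>\<^sub>E (UNIV :: bool set)"

definition Z_I :: "'a set \<Rightarrow> 'e set \<Rightarrow> ('e \<Rightarrow> 'a \<times> 'a) \<Rightarrow> real \<Rightarrow> ('a \<Rightarrow> complex) \<Rightarrow> complex" where
  "Z_I V E ends \<beta> z = (\<Sum>\<sigma>\<in>spins V. complex_of_real (\<beta> ^ dcut E ends \<sigma>) *
       (\<Prod>v\<in>{v\<in>V. \<sigma> v}. z v))"

definition legal_weight :: "'a set \<Rightarrow> 'e set \<Rightarrow> ('e \<Rightarrow> 'a \<times> 'a) \<Rightarrow> ('a \<Rightarrow> nat) \<Rightarrow> bool" where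
  "legal_weight V E ends w \<longleftrightarrow> (\<forall>v\<in>V. w v > 0 \<and> w v \<ge> deg E ends v)"

definition Z_w :: "'a set \<Rightarrow> 'e set \<Rightarrow> ('e \<Rightarrow> 'a \<times> 'a) \<Rightarrow> real \<Rightarrow> ('a \<Rightarrow> nat) \<Rightarrow> ('a \<Rightarrow> complex) \<Rightarrow> complex" where
  "Z_w V E ends \<beta> w z = (\<Sum>\<sigma>\<in>spins V. complex_of_real (\<beta> ^ dcut E ends \<sigma>) *
       (\<Prod>v\<in>{v\<in>V. \<sigma> v}. z v ^ w v))"

text \<open>The operator D_G = sum_v z_v d/dz_v applied to a function F of the activities,
  evaluated at z (partial derivatives as complex derivatives in one variable).\<close>
definition DG :: "'a set \<Rightarrow> (('a \<Rightarrow> complex) \<Rightarrow> complex) \<Rightarrow> ('a \<Rightarrow> complex) \<Rightarrow> complex" where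
  "DG V F z = (\<Sum>v\<in>V. z v * deriv (\<lambda>t. F (z(v := t))) (z v))"

end

theory Submission
  imports Defs "HOL-Computational_Algebra.Fundamental_Theorem_Algebra"
begin

(*
  Write Z(y) = Z_I(G,beta,y) for the multiaffine Ising partition function and Z_v^+(y) for its
  part with sigma(v) = +.  Since Z_w(z) = Z(z^w), one has D_G Z_w(z) = sum_v w_v Z_v^+(z^w), so it
  suffices to show  S(y) = sum_v w_v Z_v^+(y) <> 0  for positive weights w and |y_v| >= 1
  (only w_v > 0 is used, so legality w_v >= deg v is more than enough).

  The third proves the Lee-Yang theorem by induction on the edges: Z(y) <> 0 if |y_v| <= 1 and
  every vertex is connected to a vertex with |y_u| < 1; by spin flip, Z(y) <> 0 if |y_v| >= 1
  everywhere and |y_u| > 1 somewhere.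
  The fourth shows S(y) <> 0.  If Z(y) <> 0, then p(t) = Z(t^w y) has all roots in the closed unit
  disk and S(y) = p'(1).  If Z(y) = 0, then |y_v| = 1 everywhere, and perturbing two activities
  shows that all Z_v^+(y) are positive multiples of one nonzero number.
*)

section \<open>Complex-analytic lemmas\<close>

text \<open>If a + b x1 + c x2 + d x1 x2 has no zeros in the open unit bidisk, then for |x1| < 1 the
  x2-coefficient is dominated by the constant one (otherwise solve for a root x2).\<close>
lemma asano_norm_bound:
  fixes a b c d x1 :: complex
  assumes H: "\<forall>x1 x2. cmod x1 < 1 \<longrightarrow> cmod x2 < 1 \<longrightarrow> a + b*x1 + c*x2 + d*x1*x2 \<noteq> 0"
    and x1: "cmod x1 < 1"
  shows "cmod (c + d*x1) \<le> cmod (a + b*x1)"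
proof (rule ccontr)
  assume "\<not> ?thesis"
  hence lt: "cmod (a + b*x1) < cmod (c + d*x1)" by simp
  hence nz: "c + d*x1 \<noteq> 0" by auto
  define x2 where "x2 = - (a + b*x1) / (c + d*x1)"
  have "cmod x2 = cmod (a + b*x1) / cmod (c + d*x1)"
    unfolding x2_def norm_divide norm_minus_cancel by simp
  hence "cmod x2 < 1" using lt nz by (simp add: divide_less_eq)
  moreover have "a + b*x1 + c*x2 + d*x1*x2 = 0"
    using nz by (simp add: x2_def field_simps)
  ultimately show False using H x1 by blast
qed

lemma norm_parallelogram: "(cmod (a + b))^2 + (cmod (a - b))^2 = 2*(cmod a)^2 + 2*(cmod (b::complex))^2"
  unfolding cmod_power2 by (simp add: power2_eq_square algebra_simps)

text \<open>Applying the bound above at x1 = r and x1 = -r in both variable orders and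
  summing with the parallelogram law gives |d| r <= |a| for all 0 <= r < 1.\<close>
lemma asano_contraction_unit:
  fixes a b c d x :: complex
  assumes H: "\<forall>x1 x2. cmod x1 < 1 \<longrightarrow> cmod x2 < 1 \<longrightarrow> a + b*x1 + c*x2 + d*x1*x2 \<noteq> 0"
    and x: "cmod x < 1"
  shows "a + d*x \<noteq> 0"
proof -
  have H': "\<forall>x1 x2. cmod x1 < 1 \<longrightarrow> cmod x2 < 1 \<longrightarrow> a + c*x1 + b*x2 + d*x1*x2 \<noteq> 0"
  proof (intro allI impI)
    fix x1 x2 :: complex assume "cmod x1 < 1" "cmod x2 < 1"
    hence "a + b*x2 + c*x1 + d*x2*x1 \<noteq> 0" using H by blast
    thus "a + c*x1 + b*x2 + d*x1*x2 \<noteq> 0" by (simp add: algebra_simps)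
  qed
  have key: "cmod d * r \<le> cmod a" if r: "0 \<le> r" "r < 1" for r :: real
  proof -
    have n: "cmod (complex_of_real r) < 1" "cmod (- complex_of_real r) < 1" using r by auto
    have i1: "cmod (c + d*r) \<le> cmod (a + b*r)" "cmod (c + d*(-r)) \<le> cmod (a + b*(-r))"
      using asano_norm_bound[OF H n(1)] asano_norm_bound[OF H n(2)] by auto
    have i2: "cmod (b + d*r) \<le> cmod (a + c*r)" "cmod (b + d*(-r)) \<le> cmod (a + c*(-r))"
      using asano_norm_bound[OF H' n(1)] asano_norm_bound[OF H' n(2)] by auto
    have sq: "\<And>u v. cmod u \<le> cmod v \<Longrightarrow> (cmod u)^2 \<le> (cmod v)^2"
      by (simp add: power_mono)
    have p1: "(cmod (c + d*r))^2 + (cmod (c + d*(-r)))^2 \<le> (cmod (a + b*r))^2 + (cmod (a + b*(-r)))^2"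
      using sq[OF i1(1)] sq[OF i1(2)] by linarith
    have p2: "(cmod (b + d*r))^2 + (cmod (b + d*(-r)))^2 \<le> (cmod (a + c*r))^2 + (cmod (a + c*(-r)))^2"
      using sq[OF i2(1)] sq[OF i2(2)] by linarith
    have e: "\<And>u v :: complex. (cmod (u + v * r))^2 + (cmod (u + v * (-r)))^2 = 2*(cmod u)^2 + 2*(cmod v)^2 * r^2"
      using norm_parallelogram by (simp add: norm_mult power_mult_distrib)
    have "r^2 \<le> 1" using r by (simp add: power_le_one)
    hence "(cmod b)^2 * r^2 \<le> (cmod b)^2" "(cmod c)^2 * r^2 \<le> (cmod c)^2"
      by (simp_all add: mult_left_le)
    moreover have "2*(cmod c)^2 + 2*(cmod d)^2*r^2 \<le> 2*(cmod a)^2 + 2*(cmod b)^2*r^2"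
      using p1 by (simp only: e)
    moreover have "2*(cmod b)^2 + 2*(cmod d)^2*r^2 \<le> 2*(cmod a)^2 + 2*(cmod c)^2*r^2"
      using p2 by (simp only: e)
    ultimately have "(cmod d)^2 * r^2 \<le> (cmod a)^2" by linarith
    hence "(cmod d * r)^2 \<le> (cmod a)^2" by (simp add: power_mult_distrib)
    thus ?thesis using r by (meson norm_ge_zero power2_le_imp_le)
  qed
  show ?thesis
  proof (cases "d = 0")
    case True
    thus ?thesis using H[rule_format, of 0 0] by simp
  next
    case False
    define r where "r = (1 + cmod x)/2"
    have r: "0 \<le> r" "r < 1" "cmod x < r" using x by (auto simp: r_def)
    have "cmod (d*x) < cmod d * r" using False r by (simp add: norm_mult)
    also have "\<dots> \<le> cmod a" using key r by auto
    finally show ?thesis by (metis add_eq_0_iff norm_minus_cancel order_less_irrefl)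
  qed
qed

lemma asano_contraction:
  fixes a b c d x :: complex and r1 r2 :: real
  assumes r: "r1 > 0" "r2 > 0"
    and H: "\<forall>x1 x2. cmod x1 < r1 \<longrightarrow> cmod x2 < r2 \<longrightarrow> a + b*x1 + c*x2 + d*x1*x2 \<noteq> 0"
    and x: "cmod x < r1 * r2"
  shows "a + d*x \<noteq> 0"
proof -
  have "\<forall>x1 x2. cmod x1 < 1 \<longrightarrow> cmod x2 < 1 \<longrightarrow>
      a + (b*r1)*x1 + (c*r2)*x2 + (d*r1*r2)*x1*x2 \<noteq> 0"
  proof (intro allI impI)
    fix x1 x2 :: complex assume "cmod x1 < 1" "cmod x2 < 1"
    hence "cmod (r1*x1) < r1" "cmod (r2*x2) < r2" using r by (auto simp: norm_mult)
    hence "a + b*(r1*x1) + c*(r2*x2) + d*(r1*x1)*(r2*x2) \<noteq> 0" using H by blast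
    thus "a + (b*r1)*x1 + (c*r2)*x2 + (d*r1*r2)*x1*x2 \<noteq> 0" by (simp add: algebra_simps)
  qed
  moreover have "cmod (x / (r1*r2)) < 1" using x r by (simp add: norm_divide norm_mult divide_less_eq)
  ultimately have "a + (d*r1*r2) * (x/(r1*r2)) \<noteq> 0" by (rule asano_contraction_unit)
  thus ?thesis using r by simp
qed

text \<open>The real inequality behind the next lemma, with m = |a| and x = Re a.\<close>
lemma edge_factor_inequality:
  fixes bt s m x :: real
  assumes b: "0 < bt" "bt < 1" and s: "s \<le> 1" and m: "0 \<le> m" "m < s" and x: "x \<le> m"
  shows "(1 + bt * s)^2 * (bt^2 + 2*bt*x + m^2) \<le> (bt + s)^2 * (1 + 2*bt*x + bt^2*m^2)"
proof -
  have c: "0 \<le> (1 + bt * s)^2 - (bt + s)^2"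
  proof -
    have "(1 + bt * s)^2 - (bt + s)^2 = (1 - bt^2)*(1 - s^2)" by (simp add: power2_eq_square algebra_simps)
    moreover have "0 \<le> 1 - bt^2" using b by (simp add: power_le_one)
    moreover have "0 \<le> 1 - s^2" using s m by (simp add: power_le_one)
    ultimately show ?thesis by simp
  qed
  have "(1 + bt * s)^2 * (bt^2 + 2*bt*x + m^2) - (bt + s)^2 * (1 + 2*bt*x + bt^2*m^2)
      = 2*bt*x*((1 + bt * s)^2 - (bt + s)^2) + ((1 + bt * s)^2*(bt^2 + m^2) - (bt + s)^2*(1 + bt^2*m^2))"
    by (simp add: algebra_simps)
  also have "\<dots> \<le> 2*bt*m*((1 + bt * s)^2 - (bt + s)^2) + ((1 + bt * s)^2*(bt^2 + m^2) - (bt + s)^2*(1 + bt^2*m^2))"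
    using c x b by (simp add: mult_right_mono)
  also have "\<dots> = ((1 + bt * s)*(bt + m) - (bt + s)*(1 + bt*m)) * ((1 + bt * s)*(bt + m) + (bt + s)*(1 + bt*m))"
    by (simp add: power2_eq_square algebra_simps)
  also have "\<dots> \<le> 0"
  proof -
    have "(1 + bt * s)*(bt + m) - (bt + s)*(1 + bt*m) = (m - s)*(1 - bt^2)"
      by (simp add: power2_eq_square algebra_simps)
    moreover have "(m - s)*(1 - bt^2) \<le> 0" using m b by (simp add: mult_nonpos_nonneg power_le_one)
    moreover have "0 \<le> (1 + bt * s)*(bt + m) + (bt + s)*(1 + bt*m)" using b m by simp
    ultimately show ?thesis by (simp add: mult_nonpos_nonneg)
  qed
  finally show ?thesis by simp
qed

text \<open>The partition function 1 + bt a + bt b + a b of a single edge with activities a, b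
  has no zeros on the polydisk |a| < s, |b| < (1 + bt s)/(bt + s), whose second radius exceeds 1
  when s < 1.  Indeed a zero means b = -(1 + bt a)/(bt + a), and the Moebius map
  a |-> (1 + bt a)/(bt + a) sends the disk |a| < s outside the circle of that radius.\<close>
lemma edge_factor_nonzero:
  fixes a b :: complex and bt s :: real
  assumes bt: "0 < bt" "bt < 1" and s: "s \<le> 1" and a: "cmod a < s"
    and b: "cmod b * (bt + s) < 1 + bt * s"
  shows "1 + bt*a + bt*b + a*b \<noteq> 0"
proof
  assume E: "1 + bt*a + bt*b + a*b = 0"
  show False
  proof (cases "bt + a = 0")
    case True
    with E have "complex_of_real (bt*bt) = 1" by (simp add: add_eq_0_iff algebra_simps)
    hence "bt*bt = 1" by (metis of_real_eq_1_iff)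
    moreover have "bt*bt < 1 * 1" using bt by (intro mult_strict_mono) auto
    ultimately show False by simp
  next
    case False
    have "b*(bt + a) = - (1 + bt*a)" using E by (simp add: algebra_simps eq_neg_iff_add_eq_0)
    hence n: "cmod b * cmod (bt + a) = cmod (1 + bt*a)" by (metis norm_minus_cancel norm_mult)
    define m where "m = cmod a"
    define x where "x = Re a"
    have m: "0 \<le> m" "m < s" using a by (auto simp: m_def)
    have x: "x \<le> m" by (simp add: x_def m_def complex_Re_le_cmod)
    have n1: "(cmod (1 + bt*a))^2 = 1 + 2*bt*x + bt^2*m^2"
      unfolding m_def x_def cmod_power2 by (simp add: power2_eq_square algebra_simps)
    have n2: "(cmod (bt + a))^2 = bt^2 + 2*bt*x + m^2"
      unfolding m_def x_def cmod_power2 by (simp add: power2_eq_square algebra_simps)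
    have "((1 + bt * s) * cmod (bt + a))^2 \<le> ((bt + s) * cmod (1 + bt*a))^2"
      unfolding power_mult_distrib n1 n2 using edge_factor_inequality[OF bt s m x] by simp
    hence k: "(1 + bt * s) * cmod (bt + a) \<le> (bt + s) * cmod (1 + bt*a)"
      using bt m by (meson norm_ge_zero power2_le_imp_le zero_le_mult_iff add_nonneg_nonneg
          less_imp_le order_trans)
    have "cmod b * (bt + s) * cmod (bt + a) < (1 + bt * s) * cmod (bt + a)"
      using b False by (simp add: mult_strict_right_mono)
    also have "\<dots> \<le> (bt + s) * cmod (1 + bt*a)" by (rule k)
    also have "\<dots> = cmod b * (bt + s) * cmod (bt + a)" using n by (simp add: algebra_simps)
    finally show False by simp
  qed
qed

text \<open>Let A + B a + C b + D a b be zero-free on the open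
  unit bidisk.  Inserting an edge between the two variables turns it into
  A + bt B a + bt C b + D a b, which is zero-free for |a| < 1, |b| <= 1.  Proof: multiply by the
  edge factor in fresh variables (x2, b2) and contract the pairs (a, x2), then (b, b2), by Asano;
  the edge factor allows a radius T > 1 for b2, so the closed disk |b| <= 1 is reached.\<close>
lemma edge_insertion:
  fixes A B C D a0 b0 :: complex and bt :: real
  assumes bt: "0 < bt" "bt < 1"
    and P: "\<forall>a b. cmod a < 1 \<longrightarrow> cmod b < 1 \<longrightarrow> A + B*a + C*b + D*a*b \<noteq> 0"
    and a0: "cmod a0 < 1" and b0: "cmod b0 \<le> 1"
  shows "A + bt*B*a0 + bt*C*b0 + D*a0*b0 \<noteq> 0"
proof -
  define s where "s = (1 + cmod a0)/2"
  have "cmod a0 < s" "s < 1" using a0 unfolding s_def by (simp_all add: field_simps)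
  moreover have "0 < s" using calculation(1) norm_ge_zero[of a0] by linarith
  ultimately have s: "cmod a0 < s" "s < 1" "0 < s" by blast+
  define T where "T = (1 + bt * s)/(bt + s)"
  have "0 < (1 - bt)*(1 - s)" using bt s by simp
  hence "bt + s < 1 + bt * s" by (simp add: algebra_simps)
  hence T1: "1 < T" using bt s by (simp add: T_def)
  have first_contraction: "(A + C*b1)*(1 + bt*b2) + ((B + D*b1)*(bt + b2)) * a \<noteq> 0"
    if b1: "cmod b1 < 1" and b2: "cmod b2 < T" and a: "cmod a < 1 * s" for b1 b2 a :: complex
  proof -
    have "\<forall>x1 x2. cmod x1 < 1 \<longrightarrow> cmod x2 < s \<longrightarrow>
      (A + C*b1)*(1 + bt*b2) + ((B + D*b1)*(1 + bt*b2))*x1 + ((A + C*b1)*(bt + b2))*x2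
        + ((B + D*b1)*(bt + b2))*x1*x2 \<noteq> 0"
    proof (intro allI impI)
      fix x1 x2 :: complex assume x1: "cmod x1 < 1" and x2: "cmod x2 < s"
      have "A + B*x1 + C*b1 + D*x1*b1 \<noteq> 0" using P x1 b1 by blast
      moreover have "1 + bt*x2 + bt*b2 + x2*b2 \<noteq> 0"
      proof (rule edge_factor_nonzero[OF bt _ x2])
        show "s \<le> 1" using s by simp
        show "cmod b2 * (bt + s) < 1 + bt * s"
          using b2 s bt by (simp add: T_def pos_less_divide_eq)
      qed
      ultimately have "(A + B*x1 + C*b1 + D*x1*b1) * (1 + bt*x2 + bt*b2 + x2*b2) \<noteq> 0" by simp
      thus "(A + C*b1)*(1 + bt*b2) + ((B + D*b1)*(1 + bt*b2))*x1 + ((A + C*b1)*(bt + b2))*x2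
        + ((B + D*b1)*(bt + b2))*x1*x2 \<noteq> 0" by (simp add: algebra_simps)
    qed
    from asano_contraction[OF _ _ this a] s show ?thesis by simp
  qed
  have "\<forall>x1 x2. cmod x1 < 1 \<longrightarrow> cmod x2 < T \<longrightarrow>
      (A + bt*B*a0) + (C + bt*D*a0)*x1 + (bt*A + B*a0)*x2 + (bt*C + D*a0)*x1*x2 \<noteq> 0"
  proof (intro allI impI)
    fix x1 x2 :: complex assume "cmod x1 < 1" "cmod x2 < T"
    from first_contraction[OF this] s have "(A + C*x1)*(1 + bt*x2) + ((B + D*x1)*(bt + x2)) * a0 \<noteq> 0"
      by simp
    thus "(A + bt*B*a0) + (C + bt*D*a0)*x1 + (bt*A + B*a0)*x2 + (bt*C + D*a0)*x1*x2 \<noteq> 0"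
      by (simp add: algebra_simps)
  qed
  moreover have "cmod b0 < 1 * T" using b0 T1 by simp
  ultimately have "(A + bt*B*a0) + (bt*C + D*a0)*b0 \<noteq> 0" using T1 by (intro asano_contraction) auto
  thus ?thesis by (simp add: algebra_simps)
qed

text \<open>Each root r <> 1 of the closed unit disk contributes 1/(1 - r), of positive real part.\<close>
lemma re_inverse_one_minus_pos:
  fixes r :: complex
  assumes "cmod r \<le> 1" "r \<noteq> 1"
  shows "0 < Re (1 / (1 - r))"
proof -
  have "Re r < 1"
  proof (rule ccontr)
    assume "\<not> Re r < 1"
    hence "Re r = 1" using complex_Re_le_cmod[of r] assms(1) by linarith
    moreover have "(Im r)^2 \<le> 0"
      using \<open>Re r = 1\<close> cmod_power2[of r] power_le_one[OF norm_ge_zero assms(1), of 2] by simp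
    ultimately have "r = 1" by (simp add: complex_eq_iff)
    with assms(2) show False by simp
  qed
  thus ?thesis using assms(2) by (simp add: Re_divide')
qed

text \<open>A Gauss-Lucas type fact: if all roots of p lie in the closed unit disk and p(1) <> 0, then
  Re(p'(1)/p(1)) = sum over roots r of Re(1/(1-r)) is nonnegative, and positive if deg p > 0.\<close>
lemma logderiv_at_one_re_pos:
  fixes p :: "complex poly"
  assumes "degree p = n" "\<forall>t. poly p t = 0 \<longrightarrow> cmod t \<le> 1" "poly p 1 \<noteq> 0"
  shows "0 \<le> Re (poly (pderiv p) 1 / poly p 1) \<and> (0 < n \<longrightarrow> 0 < Re (poly (pderiv p) 1 / poly p 1))"
  using assms
proof (induction n arbitrary: p)
  case 0
  hence "pderiv p = 0" by (simp add: pderiv_eq_0_iff)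
  thus ?case by simp
next
  case (Suc n)
  hence "\<not> constant (poly p)" by (simp add: constant_degree)
  then obtain r where r: "poly p r = 0" using fundamental_theorem_of_algebra by blast
  hence "[:-r, 1:] dvd p" by (simp add: poly_eq_0_iff_dvd)
  then obtain q where pq: "p = [:-r, 1:] * q" by (elim dvdE)
  have "q \<noteq> 0" using pq Suc.prems(3) by auto
  hence dq: "degree q = n" using Suc.prems(1) pq degree_mult_eq[of "[:-r,1:]" q] by simp
  have polyp: "\<And>t. poly p t = (t - r) * poly q t" unfolding pq by (simp add: algebra_simps)
  have q1: "poly q 1 \<noteq> 0" and r1: "r \<noteq> 1" using Suc.prems(3) polyp[of 1] by auto
  have qroots: "\<forall>t. poly q t = 0 \<longrightarrow> cmod t \<le> 1" using Suc.prems(2) polyp by auto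
  have IH: "0 \<le> Re (poly (pderiv q) 1 / poly q 1)" using Suc.IH[OF dq qroots q1] by simp
  have "poly (pderiv p) 1 = (1 - r) * poly (pderiv q) 1 + poly q 1"
    unfolding pq pderiv_mult by (simp add: pderiv_pCons algebra_simps)
  hence "poly (pderiv p) 1 / poly p 1 = poly (pderiv q) 1 / poly q 1 + 1 / (1 - r)"
    using q1 r1 by (simp add: polyp field_simps)
  moreover have "0 < Re (1 / (1 - r))" using Suc.prems(2) r r1 by (intro re_inverse_one_minus_pos) auto
  ultimately show ?case using IH by simp
qed

text \<open>Unless k is a negative real, some direction e in the open right half-plane is also turned
  into the right half-plane by k (take e = |k| + conj k, so that k e = |k| (|k| + k)).\<close>
lemma right_halfplane_direction:
  fixes k :: complex
  assumes "k \<noteq> 0" and "\<not> (Im k = 0 \<and> Re k < 0)"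
  shows "\<exists>e. 0 < Re e \<and> 0 < Re (k * e)"
proof -
  have pos: "0 < cmod k + Re k"
  proof (rule ccontr)
    assume "\<not> 0 < cmod k + Re k"
    hence le: "cmod k \<le> - Re k" by simp
    hence "(cmod k)^2 \<le> (Re k)^2"
      by (metis abs_le_square_iff abs_of_nonneg norm_ge_zero order.trans abs_ge_minus_self)
    hence i0: "Im k = 0" by (simp add: cmod_power2)
    hence "Re k \<noteq> 0" using assms(1) by (simp add: complex_eq_iff)
    moreover have "Re k \<le> 0" using le norm_ge_zero[of k] by linarith
    ultimately show False using assms(2) i0 by simp
  qed
  define e where "e = complex_of_real (cmod k) + cnj k"
  have "k * cnj k = (complex_of_real (cmod k))^2" by (metis complex_norm_square of_real_power)
  hence "k * e = complex_of_real (cmod k) * k + complex_of_real ((cmod k)^2)"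
    by (simp add: e_def distrib_left mult.commute)
  hence "Re (k * e) = cmod k * (cmod k + Re k)" by (simp add: power2_eq_square algebra_simps)
  hence "0 < Re (k * e)" using pos assms(1) by simp
  moreover have "0 < Re e" using pos by (simp add: e_def)
  ultimately show ?thesis by blast
qed

text \<open>Otherwise, with k = -g/h and e as above, the zero
  s = x e, r = k s/(1 + (K/h) s) has Re s > 0 and Re r > 0 for small x > 0.\<close>
lemma positive_multiple_of_bilinear_nonvanishing:
  fixes g h K :: complex
  assumes g: "g \<noteq> 0" and h: "h \<noteq> 0"
    and H: "\<forall>s r. 1 < cmod (1 + s) \<longrightarrow> 1 < cmod (1 + r) \<longrightarrow> g * s + h * r + K * s * r \<noteq> 0"
  shows "\<exists>l>0. g = of_real l * h"
proof -
  define k where "k = - g / h"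
  have main: "Im k = 0 \<and> Re k < 0"
  proof (rule ccontr)
    assume "\<not> (Im k = 0 \<and> Re k < 0)"
    moreover have "k \<noteq> 0" using g h by (simp add: k_def)
    ultimately obtain e where e: "0 < Re e" "0 < Re (k * e)" using right_halfplane_direction by blast
    define c where "c = K / h"
    define f where "f = (\<lambda>x::real. k * e / (1 + c * of_real x * e))"
    have "(f \<longlongrightarrow> k * e / (1 + c * of_real 0 * e)) (at_right 0)"
      unfolding f_def by (intro tendsto_intros) auto
    hence "(f \<longlongrightarrow> k * e) (at_right 0)" by simp
    hence "((\<lambda>x. Re (f x)) \<longlongrightarrow> Re (k * e)) (at_right 0)" by (rule tendsto_Re)
    hence ev1: "eventually (\<lambda>x. 0 < Re (f x)) (at_right 0)" using e(2) by (rule order_tendstoD(1))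
    have "((\<lambda>x::real. 1 + c * of_real x * e) \<longlongrightarrow> 1 + c * of_real 0 * e) (at_right 0)"
      by (intro tendsto_intros)
    hence "((\<lambda>x::real. 1 + c * of_real x * e) \<longlongrightarrow> 1) (at_right 0)" by simp
    hence ev2: "eventually (\<lambda>x::real. 1 + c * of_real x * e \<noteq> 0) (at_right 0)"
      by (rule tendsto_imp_eventually_ne) simp
    have "eventually (\<lambda>x. 0 < Re (f x) \<and> 1 + c * of_real x * e \<noteq> 0 \<and> 0 < x) (at_right (0::real))"
      using ev1 ev2 eventually_at_right_less by eventually_elim auto
    then obtain x :: real where x: "0 < Re (f x)" "1 + c * of_real x * e \<noteq> 0" "0 < x"
      using eventually_happens' trivial_limit_at_right_real by blast
    define s where "s = of_real x * e"
    define r where "r = of_real x * f x"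
    have "1 < cmod (1 + s)"
      using complex_Re_le_cmod[of "1 + s"] mult_pos_pos[OF x(3) e(1)] by (simp add: s_def)
    moreover have "1 < cmod (1 + r)"
      using complex_Re_le_cmod[of "1 + r"] mult_pos_pos[OF x(3) x(1)] by (simp add: r_def)
    moreover have "g * s + h * r + K * s * r = 0"
    proof -
      have "r * (1 + c * s) = k * s" using x(2) by (simp add: r_def f_def s_def mult_ac)
      hence "h * (r * (1 + c * s)) = h * (k * s)" by simp
      hence "h * r + (h * c) * s * r = (h * k) * s" by (simp add: algebra_simps)
      moreover have "h * k = - g" "h * c = K" using h by (simp_all add: k_def c_def)
      ultimately have "h * r + K * s * r = - g * s" by (simp only:)
      thus ?thesis by (simp add: add.assoc)
    qed
    ultimately show False using H by blast
  qed
  show ?thesis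
  proof (intro exI conjI)
    show "0 < - Re k" using main by simp
    have "k = complex_of_real (Re k)" using main by (simp add: complex_eq_iff)
    thus "g = complex_of_real (- Re k) * h" using h by (simp add: k_def field_simps)
  qed
qed

section \<open>Algebraic identities for the Ising partition function\<close>

lemma sum_filter_split: "finite A \<Longrightarrow> sum f A = sum f {x\<in>A. P x} + sum f {x\<in>A. \<not> P x}"
  by (subst sum.union_disjoint[symmetric]) (auto intro: sum.cong)

lemma finite_spins: "finite V \<Longrightarrow> finite (spins V)"
  unfolding spins_def by (intro finite_PiE) auto

definition Z_pinned :: "'a set \<Rightarrow> 'e set \<Rightarrow> ('e \<Rightarrow> 'a \<times> 'a) \<Rightarrow> real \<Rightarrow> 'a \<Rightarrow> 'a \<Rightarrow> bool \<Rightarrow> bool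
    \<Rightarrow> ('a \<Rightarrow> complex) \<Rightarrow> complex" where
  "Z_pinned V E ends bt a b p q y = (\<Sum>\<sigma>\<in>{\<sigma>\<in>spins V. \<sigma> a = p \<and> \<sigma> b = q}.
      complex_of_real (bt ^ dcut E ends \<sigma>) * (\<Prod>v\<in>{v\<in>V. \<sigma> v}. y v))"

text \<open>The partition function restricted to configurations with spin + at v; it is the quantity
  y_v dZ/dy_v.\<close>
definition Z_plus :: "'a set \<Rightarrow> 'e set \<Rightarrow> ('e \<Rightarrow> 'a \<times> 'a) \<Rightarrow> real \<Rightarrow> 'a \<Rightarrow> ('a \<Rightarrow> complex) \<Rightarrow> complex" where
  "Z_plus V E ends bt v y = (\<Sum>\<sigma>\<in>{\<sigma>\<in>spins V. \<sigma> v}. complex_of_real (bt ^ dcut E ends \<sigma>) * (\<Prod>u\<in>{u\<in>V. \<sigma> u}. y u))"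

lemma Z_w_eq_Z_I: "Z_w V E ends bt w z = Z_I V E ends bt (\<lambda>u. z u ^ w u)"
  by (simp add: Z_w_def Z_I_def)

lemma Z_I_eq_Z_w_one: "Z_I V E ends bt = Z_w V E ends bt (\<lambda>_. 1)"
  by (rule ext) (simp add: Z_w_def Z_I_def)

lemma Z_split_pinned:
  assumes "finite V"
  shows "Z_I V E ends bt y = Z_pinned V E ends bt a b True True y + Z_pinned V E ends bt a b True False y
     + Z_pinned V E ends bt a b False True y + Z_pinned V E ends bt a b False False y"
proof -
  have fin: "finite (spins V)" "finite {\<sigma>\<in>spins V. \<sigma> a}" "finite {\<sigma>\<in>spins V. \<not> \<sigma> a}"
    using finite_spins[OF assms] by auto
  have sets: "{\<sigma>\<in>{\<sigma>\<in>spins V. \<sigma> a}. \<sigma> b} = {\<sigma>\<in>spins V. \<sigma> a = True \<and> \<sigma> b = True}"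
    "{\<sigma>\<in>{\<sigma>\<in>spins V. \<sigma> a}. \<not> \<sigma> b} = {\<sigma>\<in>spins V. \<sigma> a = True \<and> \<sigma> b = False}"
    "{\<sigma>\<in>{\<sigma>\<in>spins V. \<not> \<sigma> a}. \<sigma> b} = {\<sigma>\<in>spins V. \<sigma> a = False \<and> \<sigma> b = True}"
    "{\<sigma>\<in>{\<sigma>\<in>spins V. \<not> \<sigma> a}. \<not> \<sigma> b} = {\<sigma>\<in>spins V. \<sigma> a = False \<and> \<sigma> b = False}"
    by auto
  show ?thesis
    unfolding Z_I_def Z_pinned_def sum_filter_split[OF fin(1), where P="\<lambda>\<sigma>. \<sigma> a"]
      sum_filter_split[OF fin(2), where P="\<lambda>\<sigma>. \<sigma> b"] sum_filter_split[OF fin(3), where P="\<lambda>\<sigma>. \<sigma> b"] sets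
    by (simp add: add.assoc)
qed

lemma prod_fun_upd:
  assumes "finite S"
  shows "(\<Prod>u\<in>S. (y(a:=x)) u) = (if a \<in> S then x else 1) * (\<Prod>u\<in>S. (y(a:=1)) u)"
proof (cases "a \<in> S")
  case True
  have "(\<Prod>u\<in>S-{a}. (y(a:=x)) u) = (\<Prod>u\<in>S-{a}. (y(a:=1)) u)" by (rule prod.cong) auto
  thus ?thesis using True prod.remove[OF assms True, of "y(a:=x)"] prod.remove[OF assms True, of "y(a:=1)"]
    by simp
next
  case False
  thus ?thesis by (simp, intro prod.cong) auto
qed

lemma Z_pinned_scale:
  assumes V: "finite V" "a \<in> V" "b \<in> V" "a \<noteq> b"
  shows "Z_pinned V E ends bt a b p q (y(a:=a', b:=b')) =
     (if p then a' else 1) * (if q then b' else 1) * Z_pinned V E ends bt a b p q (y(a:=1, b:=1))"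
  unfolding Z_pinned_def sum_distrib_left
proof (rule sum.cong[OF refl])
  fix \<sigma> assume "\<sigma> \<in> {\<sigma> \<in> spins V. \<sigma> a = p \<and> \<sigma> b = q}"
  hence i: "b \<in> {v\<in>V. \<sigma> v} \<longleftrightarrow> q" "a \<in> {v\<in>V. \<sigma> v} \<longleftrightarrow> p" using V by auto
  have fS: "finite {v\<in>V. \<sigma> v}" using V by simp
  have "(\<Prod>v\<in>{v\<in>V. \<sigma> v}. (y(a:=a', b:=b')) v) =
      (if q then b' else 1) * (\<Prod>v\<in>{v\<in>V. \<sigma> v}. (y(b:=1, a:=a')) v)"
    using prod_fun_upd[OF fS, of "y(a:=a')" b b'] fun_upd_twist[OF V(4), of y a' 1] i(1) by simp
  also have "\<dots> = (if q then b' else 1) * ((if p then a' else 1) * (\<Prod>v\<in>{v\<in>V. \<sigma> v}. (y(a:=1, b:=1)) v))"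
    using prod_fun_upd[OF fS, of "y(b:=1)" a a'] fun_upd_twist[OF V(4), of y 1 1] i(2) by simp
  finally have "(\<Prod>v\<in>{v\<in>V. \<sigma> v}. (y(a:=a', b:=b')) v) =
      (if q then b' else 1) * ((if p then a' else 1) * (\<Prod>v\<in>{v\<in>V. \<sigma> v}. (y(a:=1, b:=1)) v))" .
  thus "complex_of_real (bt ^ dcut E ends \<sigma>) * (\<Prod>v\<in>{v\<in>V. \<sigma> v}. (y(a:=a', b:=b')) v) =
      (if p then a' else 1) * (if q then b' else 1) *
      (complex_of_real (bt ^ dcut E ends \<sigma>) * (\<Prod>v\<in>{v\<in>V. \<sigma> v}. (y(a:=1, b:=1)) v))"
    by (simp only: mult_ac)
qed

lemma Z_biaffine:
  assumes V: "finite V" "a \<in> V" "b \<in> V" "a \<noteq> b"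
  shows "Z_I V E ends bt (y(a:=a', b:=b')) =
     Z_pinned V E ends bt a b False False (y(a:=1, b:=1)) + Z_pinned V E ends bt a b True False (y(a:=1, b:=1)) * a'
     + Z_pinned V E ends bt a b False True (y(a:=1, b:=1)) * b' + Z_pinned V E ends bt a b True True (y(a:=1, b:=1)) * a' * b'"
  unfolding Z_split_pinned[OF V(1), of E ends bt "y(a:=a', b:=b')" a b]
    Z_pinned_scale[OF V, where y=y and a'=a' and b'=b']
  by (simp only: if_True if_False mult_1_left mult_1_right) (simp only: ac_simps)

lemma dcut_delete_edge:
  assumes "finite E" "e \<in> E" "ends e = (a,b) \<or> ends e = (b,a)"
  shows "dcut E ends \<sigma> = dcut (E - {e}) ends \<sigma> + (if \<sigma> a \<noteq> \<sigma> b then 1 else 0)"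
proof -
  let ?P = "\<lambda>x. \<sigma> (fst (ends x)) \<noteq> \<sigma> (snd (ends x))"
  have Pe: "?P e \<longleftrightarrow> \<sigma> a \<noteq> \<sigma> b" using assms(3) by auto
  show ?thesis
  proof (cases "?P e")
    case True
    hence "{x\<in>E. ?P x} = insert e {x\<in>E - {e}. ?P x}" using assms(2) by auto
    thus ?thesis using True Pe assms(1) by (simp add: dcut_def)
  next
    case False
    hence "{x\<in>E. ?P x} = {x\<in>E - {e}. ?P x}" by auto
    thus ?thesis using False Pe by (simp add: dcut_def)
  qed
qed

lemma Z_pinned_delete_edge:
  assumes "finite E" "e \<in> E" "ends e = (a,b) \<or> ends e = (b,a)"
  shows "Z_pinned V E ends bt a b p q y =
    (if p \<noteq> q then complex_of_real bt else 1) * Z_pinned V (E - {e}) ends bt a b p q y"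
  unfolding Z_pinned_def sum_distrib_left
proof (rule sum.cong[OF refl])
  fix \<sigma> assume "\<sigma> \<in> {\<sigma> \<in> spins V. \<sigma> a = p \<and> \<sigma> b = q}"
  hence "bt ^ dcut E ends \<sigma> = (if p \<noteq> q then bt else 1) * bt ^ dcut (E - {e}) ends \<sigma>"
    unfolding dcut_delete_edge[where a=a and b=b and e=e and ends=ends and \<sigma>=\<sigma>, OF assms] by (simp add: power_add)
  thus "complex_of_real (bt ^ dcut E ends \<sigma>) * (\<Prod>v\<in>{v \<in> V. \<sigma> v}. y v) =
    (if p \<noteq> q then complex_of_real bt else 1) *
    (complex_of_real (bt ^ dcut (E - {e}) ends \<sigma>) * (\<Prod>v\<in>{v \<in> V. \<sigma> v}. y v))"
    by (cases "p = q") (simp_all add: mult.assoc)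
qed

lemma Z_edge_biaffine:
  assumes "finite V" "finite E" "e \<in> E" "ends e = (a,b) \<or> ends e = (b,a)"
    and ab: "a \<in> V" "b \<in> V" "a \<noteq> b"
  shows "\<exists>A B C D. (\<forall>a' b'. Z_I V (E - {e}) ends bt (y(a:=a', b:=b')) = A + B*a' + C*b' + D*a'*b')
     \<and> Z_I V E ends bt y = A + bt*B*y a + bt*C*y b + D*y a*y b"
proof -
  let ?F = "\<lambda>p q. Z_pinned V (E - {e}) ends bt a b p q (y(a:=1, b:=1))"
  have "Z_pinned V (E - {e}) ends bt a b p q y = (if p then y a else 1) * (if q then y b else 1) * ?F p q"
    for p q using Z_pinned_scale[OF assms(1) ab, of "E - {e}" ends bt p q y "y a" "y b"] by simp
  hence "Z_I V E ends bt y = ?F False False + bt * ?F True False * y a + bt * ?F False True * y b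
      + ?F True True * y a * y b"
    unfolding Z_split_pinned[OF assms(1), of E ends bt y a b] Z_pinned_delete_edge[where a=a and b=b and e=e and ends=ends, OF assms(2-4)]
    by (simp add: algebra_simps)
  moreover have "Z_I V (E - {e}) ends bt (y(a:=a', b:=b')) =
      ?F False False + ?F True False * a' + ?F False True * b' + ?F True True * a' * b'" for a' b'
    by (rule Z_biaffine[OF assms(1) ab])
  ultimately show ?thesis by (intro exI[of _ "?F False False"] exI[of _ "?F True False"]
      exI[of _ "?F False True"] exI[of _ "?F True True"]) (simp add: algebra_simps)
qed

text \<open>A self-loop never joins different spins, so it does not contribute.\<close>
lemma Z_delete_loop:
  assumes "finite E" "e \<in> E" "ends e = (a,a)"
  shows "Z_I V E ends bt y = Z_I V (E - {e}) ends bt y"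
  unfolding Z_I_def using dcut_delete_edge[of E e ends a a] assms by simp

text \<open>Without edges the spins are independent and Z factorises.\<close>
lemma Z_edgeless:
  assumes "finite V"
  shows "Z_I V {} ends bt y = (\<Prod>v\<in>V. 1 + y v)"
proof -
  have "(\<Prod>v\<in>V. 1 + y v) = (\<Prod>x\<in>V. \<Sum>j\<in>(UNIV::bool set). if j then y x else 1)"
    by (simp add: UNIV_bool add.commute)
  also have "\<dots> = (\<Sum>g\<in>PiE V (\<lambda>_. UNIV). \<Prod>x\<in>V. if g x then y x else 1)"
    by (rule prod_sum_PiE) (use assms in auto)
  also have "\<dots> = (\<Sum>g\<in>spins V. \<Prod>x\<in>{x\<in>V. g x}. y x)"
    unfolding spins_def using assms by (intro sum.cong refl) (simp add: prod.inter_filter)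
  also have "\<dots> = Z_I V {} ends bt y"
    unfolding Z_I_def by (simp add: dcut_def)
  finally show ?thesis by simp
qed


text \<open>Spin-flip symmetry: flipping all spins preserves the cut, so
  Z(y) = (prod_v y_v) Z(1/y).\<close>
lemma Z_spin_flip:
  fixes y :: "'a \<Rightarrow> complex"
  assumes V: "finite V" and ev: "\<forall>e\<in>E. fst (ends e) \<in> V \<and> snd (ends e) \<in> V"
    and y0: "\<forall>v\<in>V. y v \<noteq> 0"
  shows "Z_I V E ends bt y = (\<Prod>v\<in>V. y v) * Z_I V E ends bt (\<lambda>v. inverse (y v))"
proof -
  define flip where "flip = (\<lambda>\<sigma>::'a\<Rightarrow>bool. \<lambda>v. if v \<in> V then \<not> \<sigma> v else undefined)"
  define h where "h = (\<lambda>\<tau>. (\<Prod>v\<in>V. y v) *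
      (complex_of_real (bt ^ dcut E ends \<tau>) * (\<Prod>v\<in>{v\<in>V. \<tau> v}. inverse (y v))))"
  have involution: "flip (flip \<sigma>) = \<sigma>" "flip \<sigma> \<in> spins V" if s: "\<sigma> \<in> spins V" for \<sigma>
  proof -
    show "flip (flip \<sigma>) = \<sigma>"
    proof
      fix x show "flip (flip \<sigma>) x = \<sigma> x"
        using PiE_arb[of \<sigma> V "\<lambda>_. UNIV" x] s by (auto simp: flip_def spins_def)
    qed
    show "flip \<sigma> \<in> spins V" by (auto simp: flip_def spins_def PiE_iff extensional_def)
  qed
  have h_flip: "h (flip \<sigma>) = complex_of_real (bt ^ dcut E ends \<sigma>) * (\<Prod>v\<in>{v\<in>V. \<sigma> v}. y v)" for \<sigma>
  proof -
    have "{e\<in>E. flip \<sigma> (fst (ends e)) \<noteq> flip \<sigma> (snd (ends e))} = {e\<in>E. \<sigma> (fst (ends e)) \<noteq> \<sigma> (snd (ends e))}"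
      using ev by (auto simp: flip_def)
    hence dc: "dcut E ends (flip \<sigma>) = dcut E ends \<sigma>" by (simp add: dcut_def)
    have st: "{v\<in>V. flip \<sigma> v} = {v\<in>V. \<not> \<sigma> v}" by (auto simp: flip_def)
    have "(\<Prod>v\<in>V. y v) = (\<Prod>v\<in>{v\<in>V. \<sigma> v}. y v) * (\<Prod>v\<in>{v\<in>V. \<not> \<sigma> v}. y v)"
    proof -
      have "V = {v\<in>V. \<sigma> v} \<union> {v\<in>V. \<not> \<sigma> v}" by auto
      thus ?thesis using V prod.union_disjoint[of "{v\<in>V. \<sigma> v}" "{v\<in>V. \<not> \<sigma> v}" y] by auto
    qed
    moreover have "(\<Prod>v\<in>{v\<in>V. \<not> \<sigma> v}. y v) * (\<Prod>v\<in>{v\<in>V. \<not> \<sigma> v}. inverse (y v)) = 1"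
    proof -
      have "(\<Prod>v\<in>{v\<in>V. \<not> \<sigma> v}. y v) * (\<Prod>v\<in>{v\<in>V. \<not> \<sigma> v}. inverse (y v))
          = (\<Prod>v\<in>{v\<in>V. \<not> \<sigma> v}. y v * inverse (y v))" by (simp add: prod.distrib)
      also have "\<dots> = 1" using y0 by (intro prod.neutral) auto
      finally show ?thesis .
    qed
    ultimately show ?thesis unfolding h_def dc st by (simp add: algebra_simps)
  qed
  have "Z_I V E ends bt y = sum h (spins V)"
    unfolding Z_I_def using involution h_flip by (intro sum.reindex_bij_witness[where i=flip and j=flip]) auto
  also have "\<dots> = (\<Prod>v\<in>V. y v) * Z_I V E ends bt (\<lambda>v. inverse (y v))"
    unfolding h_def Z_I_def by (simp add: sum_distrib_left)
  finally show ?thesis .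
qed

lemma Z_plus_scale:
  assumes "finite V" "v \<in> V"
  shows "Z_plus V E ends bt v (y(v:=t)) = t * Z_plus V E ends bt v (y(v:=1))"
  unfolding Z_plus_def sum_distrib_left
proof (rule sum.cong[OF refl])
  fix \<sigma> assume "\<sigma> \<in> {\<sigma>\<in>spins V. \<sigma> v}"
  hence "v \<in> {u\<in>V. \<sigma> u}" using assms by auto
  thus "complex_of_real (bt ^ dcut E ends \<sigma>) * (\<Prod>u\<in>{u\<in>V. \<sigma> u}. (y(v:=t)) u) =
      t * (complex_of_real (bt ^ dcut E ends \<sigma>) * (\<Prod>u\<in>{u\<in>V. \<sigma> u}. (y(v:=1)) u))"
    using prod_fun_upd[of "{u\<in>V. \<sigma> u}" y v t] assms by simp
qed

lemma Z_vertex_affine: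
  assumes V: "finite V" "v \<in> V"
  shows "Z_I V E ends bt (y(v:=t)) = Z_I V E ends bt (y(v:=0)) + t * Z_plus V E ends bt v (y(v:=1))"
proof -
  define Z_minus where "Z_minus = (\<lambda>y. \<Sum>\<sigma>\<in>{\<sigma>\<in>spins V. \<not> \<sigma> v}.
      complex_of_real (bt ^ dcut E ends \<sigma>) * (\<Prod>u\<in>{u\<in>V. \<sigma> u}. y u))"
  have split: "Z_I V E ends bt y' = Z_minus y' + Z_plus V E ends bt v y'" for y'
    unfolding Z_I_def Z_minus_def Z_plus_def
    using sum_filter_split[OF finite_spins[OF V(1)], where P="\<lambda>\<sigma>. \<sigma> v"] by (simp add: add.commute)
  have "Z_minus (y(v:=t)) = Z_minus (y(v:=0))"
    unfolding Z_minus_def by (intro sum.cong refl arg_cong2[where f="(*)"] prod.cong) auto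
  thus ?thesis using split[of "y(v:=t)"] split[of "y(v:=0)"]
      Z_plus_scale[OF V, of E ends bt y t] Z_plus_scale[OF V, of E ends bt y 0] by simp
qed

lemma Z_vertex_perturbation:
  assumes V: "finite V" "v \<in> V"
  shows "Z_I V E ends bt (y(v := y v * (1 + s))) = Z_I V E ends bt y + s * Z_plus V E ends bt v y"
  using Z_vertex_affine[OF V, of E ends bt y "y v * (1 + s)"] Z_vertex_affine[OF V, of E ends bt y "y v"]
    Z_plus_scale[OF V, of E ends bt y "y v"]
  by (simp add: algebra_simps)

lemma Z_two_vertex_perturbation:
  assumes V: "finite V" "u \<in> V" "v \<in> V" "u \<noteq> v"
  shows "\<exists>K. \<forall>s r. Z_I V E ends bt (y(u := y u * (1 + s), v := y v * (1 + r))) =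
    Z_I V E ends bt y + Z_plus V E ends bt u y * s + Z_plus V E ends bt v y * r + K * s * r"
proof -
  obtain A B C D where bi: "\<And>a' b'. Z_I V E ends bt (y(u:=a', v:=b')) = A + B*a' + C*b' + D*a'*b'"
    using Z_biaffine[OF V] by blast
  have Zy: "Z_I V E ends bt y = A + B * y u + C * y v + D * y u * y v"
    using bi[of "y u" "y v"] by simp
  have "y(u := x, v := y v) = y(u := x)" for x using V(4) by (intro ext) simp
  hence "Z_I V E ends bt (y(u := y u * (1 + 1))) = A + B * (y u * (1 + 1)) + C * y v + D * (y u * (1 + 1)) * y v"
    using bi[of "y u * (1 + 1)" "y v"] by simp
  hence pu: "Z_plus V E ends bt u y = B * y u + D * y u * y v"
    using Z_vertex_perturbation[OF V(1,2), of E ends bt y 1] Zy by (simp add: algebra_simps)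
  have "Z_I V E ends bt (y(v := y v * (1 + 1))) = A + B * y u + C * (y v * (1 + 1)) + D * y u * (y v * (1 + 1))"
    using bi[of "y u" "y v * (1 + 1)"] by simp
  hence pv: "Z_plus V E ends bt v y = C * y v + D * y u * y v"
    using Z_vertex_perturbation[OF V(1,3), of E ends bt y 1] Zy by (simp add: algebra_simps)
  show ?thesis
  proof (intro exI allI)
    fix s r
    show "Z_I V E ends bt (y(u := y u * (1 + s), v := y v * (1 + r))) = Z_I V E ends bt y
      + Z_plus V E ends bt u y * s + Z_plus V E ends bt v y * r + (D * y u * y v) * s * r"
      unfolding bi Zy pu pv by (simp add: algebra_simps)
  qed
qed

text \<open>Each summand is z_v times the derivative of
  t |-> c + t^(w_v) H, which is w_v z_v^(w_v) H.\<close>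
lemma DG_Z_w:
  assumes V: "finite V" and w: "\<forall>v\<in>V. 0 < w v"
  shows "DG V (Z_w V E ends bt w) z = (\<Sum>v\<in>V. of_nat (w v) * Z_plus V E ends bt v (\<lambda>u. z u ^ w u))"
  unfolding DG_def
proof (rule sum.cong[OF refl])
  fix v assume v: "v \<in> V"
  define Y where "Y = (\<lambda>u. z u ^ w u)"
  define k where "k = w v"
  define C where "C = Z_I V E ends bt (Y(v:=0))"
  define H where "H = Z_plus V E ends bt v (Y(v:=1))"
  have f: "(\<lambda>t. Z_w V E ends bt w (z(v := t))) = (\<lambda>t. C + t^k * H)"
  proof
    fix t
    have "(\<lambda>u. (z(v := t)) u ^ w u) = Y(v := t ^ k)" by (auto simp: Y_def k_def)
    thus "Z_w V E ends bt w (z(v := t)) = C + t^k * H"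
      unfolding Z_w_eq_Z_I C_def H_def using Z_vertex_affine[OF V v, of E ends bt Y "t ^ k"] by simp
  qed
  have "((\<lambda>t. C + t^k * H) has_field_derivative (of_nat k * z v ^ (k - 1) * H)) (at (z v))"
    by (auto intro!: derivative_eq_intros)
  hence "deriv (\<lambda>t. Z_w V E ends bt w (z(v := t))) (z v) = of_nat k * z v ^ (k - 1) * H"
    unfolding f by (rule DERIV_imp_deriv)
  moreover have "z v * z v ^ (k - 1) = Y v"
    using w v by (simp add: Y_def k_def flip: power_Suc)
  moreover have "Z_plus V E ends bt v Y = Y v * H"
    unfolding H_def using Z_plus_scale[OF V v, of E ends bt Y "Y v"] by simp
  ultimately show "z v * deriv (\<lambda>t. Z_w V E ends bt w (z(v := t))) (z v) = of_nat (w v) * Z_plus V E ends bt v Y"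
    by (simp add: k_def algebra_simps)
qed

section \<open>The Lee-Yang theorem\<close>

definition reaches_interior :: "'a set \<Rightarrow> 'e set \<Rightarrow> ('e \<Rightarrow> 'a \<times> 'a) \<Rightarrow> ('a \<Rightarrow> complex) \<Rightarrow> bool" where
  "reaches_interior V E ends y \<longleftrightarrow> (\<forall>v\<in>V. \<exists>u\<in>V. cmod (y u) < 1 \<and> (adj E ends)\<^sup>*\<^sup>* v u)"

lemma rtranclp_enters:
  assumes "R\<^sup>*\<^sup>* x u" "\<not> Q x" "Q u"
  shows "\<exists>p q. R p q \<and> \<not> Q p \<and> Q q"
  using assms by (induction rule: rtranclp_induct) blast+

lemma rtranclp_adj_delete_edge:
  assumes "(adj E ends)\<^sup>*\<^sup>* v u" "ends e = (a,b) \<or> ends e = (b,a)"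
  shows "(adj (E - {e}) ends)\<^sup>*\<^sup>* v u \<or> (adj (E - {e}) ends)\<^sup>*\<^sup>* v a \<or> (adj (E - {e}) ends)\<^sup>*\<^sup>* v b"
  using assms(1)
proof (induction rule: rtranclp_induct)
  case (step x z)
  from step.hyps(2) obtain e' where e': "e' \<in> E" "ends e' = (x,z) \<or> ends e' = (z,x)"
    unfolding adj_def by blast
  have "adj (E - {e}) ends x z \<or> x = a \<or> x = b"
    using e' assms(2) unfolding adj_def by (cases "e' = e") auto
  thus ?case using step.IH by (meson rtranclp.rtrancl_into_rtrancl)
qed simp

lemma reaches_interior_delete_edge:
  assumes reach: "reaches_interior V E ends y" and e: "ends e = (a,b) \<or> ends e = (b,a)"
    and ab: "a \<in> V" "b \<in> V"
    and y': "\<And>u. u \<noteq> a \<Longrightarrow> u \<noteq> b \<Longrightarrow> y' u = y u" "cmod (y' a) < 1" "cmod (y' b) < 1"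
  shows "reaches_interior V (E - {e}) ends y'"
  unfolding reaches_interior_def
proof
  fix v assume "v \<in> V"
  then obtain u where u: "u \<in> V" "cmod (y u) < 1" "(adj E ends)\<^sup>*\<^sup>* v u"
    using reach by (auto simp: reaches_interior_def)
  have "cmod (y' u) < 1" using u(2) y' by (cases "u = a \<or> u = b") auto
  thus "\<exists>u\<in>V. cmod (y' u) < 1 \<and> (adj (E - {e}) ends)\<^sup>*\<^sup>* v u"
    using rtranclp_adj_delete_edge[OF u(3) e] u(1) ab y'(2,3) by blast
qed

text \<open>If there are edges, some edge has an endpoint a with activity in the open disk: follow a
  path from an endpoint outside the disk to the disk.\<close>
lemma edge_with_interior_endpoint:
  assumes "E \<noteq> {}" and ev: "\<forall>e\<in>E. fst (ends e) \<in> V \<and> snd (ends e) \<in> V"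
    and reach: "reaches_interior V E ends y"
  shows "\<exists>e a b. e \<in> E \<and> (ends e = (a,b) \<or> ends e = (b,a)) \<and> a \<in> V \<and> b \<in> V \<and> cmod (y a) < 1"
proof -
  obtain e0 where e0: "e0 \<in> E" using assms(1) by blast
  show ?thesis
  proof (cases "cmod (y (fst (ends e0))) < 1")
    case True
    thus ?thesis using e0 ev by (intro exI[of _ e0] exI[of _ "fst (ends e0)"] exI[of _ "snd (ends e0)"]) auto
  next
    case False
    have "fst (ends e0) \<in> V" using e0 ev by auto
    then obtain u where "cmod (y u) < 1" "(adj E ends)\<^sup>*\<^sup>* (fst (ends e0)) u"
      using reach by (auto simp: reaches_interior_def)
    then obtain p q where pq: "adj E ends p q" "\<not> cmod (y p) < 1" "cmod (y q) < 1"
      using rtranclp_enters[of "adj E ends" _ u "\<lambda>z. cmod (y z) < 1"] False by blast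
    then obtain e where e: "e \<in> E" "ends e = (p,q) \<or> ends e = (q,p)" unfolding adj_def by blast
    thus ?thesis using ev pq by (intro exI[of _ e] exI[of _ q] exI[of _ p]) auto
  qed
qed

text \<open>Without edges, connectedness to the disk means every activity lies in the disk, and
  Z = prod_v (1 + y_v) does not vanish.\<close>
lemma lee_yang_edgeless:
  assumes "finite V" and reach: "reaches_interior V {} ends y"
  shows "Z_I V {} ends bt y \<noteq> 0"
proof -
  have "cmod (y v) < 1" if "v \<in> V" for v
  proof -
    obtain u where "cmod (y u) < 1" "(adj {} ends)\<^sup>*\<^sup>* v u"
      using reach \<open>v \<in> V\<close> by (auto simp: reaches_interior_def)
    moreover from this(2) have "v = u" by (cases rule: rtranclp.cases) (auto simp: adj_def)
    ultimately show ?thesis by simp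
  qed
  hence "\<forall>v\<in>V. 1 + y v \<noteq> 0" by (metis add_eq_0_iff norm_minus_cancel norm_one order_less_irrefl)
  thus ?thesis using Z_edgeless[OF assms(1), of ends bt y] assms(1) by (simp add: prod_zero_iff)
qed

text \<open>Induction on the edges: delete an edge ab with |y_a| < 1; the smaller graph gives a zero-free
  biaffine polynomial in (y_a, y_b) on the open bidisk, and edge insertion puts the edge back.\<close>
lemma lee_yang_disk:
  assumes V: "finite V" and E: "finite E" and ev: "\<forall>e\<in>E. fst (ends e) \<in> V \<and> snd (ends e) \<in> V"
    and bt: "0 < bt" "bt < 1"
    and y: "\<forall>v\<in>V. cmod (y v) \<le> 1" "reaches_interior V E ends y"
  shows "Z_I V E ends bt y \<noteq> 0"
  using E ev y
proof (induction E arbitrary: y rule: finite_psubset_induct)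
  case (psubset E)
  show ?case
  proof (cases "E = {}")
    case True
    thus ?thesis using lee_yang_edgeless[OF V] psubset.prems(3) by blast
  next
    case False
    then obtain e a b where e: "e \<in> E" "ends e = (a,b) \<or> ends e = (b,a)"
      and ab: "a \<in> V" "b \<in> V" and ya: "cmod (y a) < 1"
      using edge_with_interior_endpoint[OF False psubset.prems(1,3)] by blast
    have IH: "Z_I V (E - {e}) ends bt y' \<noteq> 0"
      if "\<forall>v\<in>V. cmod (y' v) \<le> 1" "reaches_interior V (E - {e}) ends y'" for y'
      using psubset.IH[of "E - {e}" y'] e(1) psubset.prems(1) that by blast
    show ?thesis
    proof (cases "a = b")
      case True
      have "reaches_interior V (E - {e}) ends y"
        using reaches_interior_delete_edge[OF psubset.prems(3) e(2) ab, of y] ya True by blast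
      moreover have "ends e = (a,a)" using e(2) True by auto
      hence "Z_I V E ends bt y = Z_I V (E - {e}) ends bt y" by (rule Z_delete_loop[OF psubset.hyps(1) e(1)])
      ultimately show ?thesis using IH psubset.prems(2) by simp
    next
      case False
      obtain A B C D :: complex where
        bi: "\<And>a' b'. Z_I V (E - {e}) ends bt (y(a:=a', b:=b')) = A + B*a' + C*b' + D*a'*b'" and
        Zy: "Z_I V E ends bt y = A + bt*B*y a + bt*C*y b + D*y a*y b"
        using Z_edge_biaffine[where a=a and b=b and e=e and ends=ends and bt=bt and y=y,
            OF V psubset.hyps(1) e ab False] by blast
      have "A + B*a' + C*b' + D*a'*b' \<noteq> 0" if "cmod a' < 1" "cmod b' < 1" for a' b'
      proof -
        have "\<forall>v\<in>V. cmod ((y(a:=a', b:=b')) v) \<le> 1" using psubset.prems(2) that by auto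
        moreover have "reaches_interior V (E - {e}) ends (y(a:=a', b:=b'))"
          by (rule reaches_interior_delete_edge[OF psubset.prems(3) e(2) ab]) (use that False in auto)
        ultimately show ?thesis using IH bi by metis
      qed
      moreover have "cmod (y b) \<le> 1" using psubset.prems(2) ab by auto
      ultimately show ?thesis unfolding Zy using edge_insertion[OF bt _ ya] by blast
    qed
  qed
qed

text \<open>Lee-Yang theorem for the exterior of the disk on a connected graph, via spin flip:
  Z(y) <> 0 if all |y_v| >= 1 and some |y_u| > 1.\<close>
lemma lee_yang_exterior:
  assumes mg: "multigraph V E ends" and cg: "connected_graph V E ends" and bt: "0 < bt" "bt < 1"
    and y: "\<forall>v\<in>V. 1 \<le> cmod (y v)" and u: "u \<in> V" "1 < cmod (y u)"
  shows "Z_I V E ends bt y \<noteq> 0"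
proof -
  have V: "finite V" and E: "finite E" and ev: "\<forall>e\<in>E. fst (ends e) \<in> V \<and> snd (ends e) \<in> V"
    using mg by (auto simp: multigraph_def)
  have y0: "\<forall>v\<in>V. y v \<noteq> 0" using y by fastforce
  have "Z_I V E ends bt (\<lambda>v. inverse (y v)) \<noteq> 0"
  proof (rule lee_yang_disk[OF V E ev bt])
    show "\<forall>v\<in>V. cmod (inverse (y v)) \<le> 1" using y by (simp add: norm_inverse inverse_le_1_iff)
    show "reaches_interior V E ends (\<lambda>v. inverse (y v))"
      using cg u unfolding reaches_interior_def connected_graph_def
      by (auto simp: norm_inverse inverse_less_1_iff intro!: bexI[of _ u])
  qed
  moreover have "(\<Prod>v\<in>V. y v) \<noteq> 0" using y0 V by simp
  ultimately show ?thesis using Z_spin_flip[OF V ev y0] by simp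
qed

section \<open>Nonvanishing of the weighted sum of the Z_plus\<close>

lemma pderiv_sum: "pderiv (\<Sum>x\<in>A. f x) = (\<Sum>x\<in>A. pderiv (f x))"
  by (induction A rule: infinite_finite_induct) (simp_all add: pderiv_add)

lemma sum_plus_weight_swap:
  fixes c :: "('a \<Rightarrow> bool) \<Rightarrow> 'b::comm_semiring_1"
  assumes V: "finite V"
  shows "(\<Sum>\<sigma>\<in>spins V. of_nat (\<Sum>v\<in>{v\<in>V. \<sigma> v}. w v) * c \<sigma>) =
    (\<Sum>v\<in>V. of_nat (w v) * (\<Sum>\<sigma>\<in>{\<sigma>\<in>spins V. \<sigma> v}. c \<sigma>))"
proof -
  have fs: "finite (spins V)" by (rule finite_spins[OF V])
  have "of_nat (\<Sum>v\<in>{v\<in>V. \<sigma> v}. w v) * c \<sigma> = (\<Sum>v\<in>V. if \<sigma> v then of_nat (w v) * c \<sigma> else 0)" for \<sigma>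
  proof -
    have "(of_nat (\<Sum>v\<in>{v\<in>V. \<sigma> v}. w v) :: 'b) = (\<Sum>v\<in>V. if \<sigma> v then of_nat (w v) else 0)"
      using V by (simp add: sum.inter_filter of_nat_sum if_distrib cong: if_cong)
    hence "of_nat (\<Sum>v\<in>{v\<in>V. \<sigma> v}. w v) * c \<sigma> = (\<Sum>v\<in>V. (if \<sigma> v then of_nat (w v) else 0) * c \<sigma>)"
      by (simp add: sum_distrib_right)
    also have "\<dots> = (\<Sum>v\<in>V. if \<sigma> v then of_nat (w v) * c \<sigma> else 0)" by (intro sum.cong refl) simp
    finally show ?thesis .
  qed
  hence "(\<Sum>\<sigma>\<in>spins V. of_nat (\<Sum>v\<in>{v\<in>V. \<sigma> v}. w v) * c \<sigma>)
      = (\<Sum>\<sigma>\<in>spins V. \<Sum>v\<in>V. if \<sigma> v then of_nat (w v) * c \<sigma> else 0)" by simp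
  also have "\<dots> = (\<Sum>v\<in>V. \<Sum>\<sigma>\<in>spins V. if \<sigma> v then of_nat (w v) * c \<sigma> else 0)" by (rule sum.swap)
  also have "\<dots> = (\<Sum>v\<in>V. of_nat (w v) * (\<Sum>\<sigma>\<in>{\<sigma>\<in>spins V. \<sigma> v}. c \<sigma>))"
    using fs by (auto simp: sum_distrib_left sum.inter_filter intro!: sum.cong)
  finally show ?thesis .
qed

lemma total_weight_attained_iff:
  fixes w :: "'a \<Rightarrow> nat"
  assumes V: "finite V" and w: "\<forall>v\<in>V. 0 < w v" and \<sigma>: "\<sigma> \<in> spins V"
  shows "(\<Sum>v\<in>{v\<in>V. \<sigma> v}. w v) = (\<Sum>v\<in>V. w v) \<longleftrightarrow> \<sigma> = (\<lambda>v. if v \<in> V then True else undefined)"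
    (is "?W = ?N \<longleftrightarrow> \<sigma> = ?\<sigma>\<^sub>0")
proof
  assume WN: "?W = ?N"
  show "\<sigma> = ?\<sigma>\<^sub>0"
  proof
    fix x show "\<sigma> x = ?\<sigma>\<^sub>0 x"
    proof (cases "x \<in> V")
      case True
      show ?thesis
      proof (rule ccontr)
        assume "\<sigma> x \<noteq> ?\<sigma>\<^sub>0 x"
        hence "\<not> \<sigma> x" using True by simp
        hence "w x \<le> (\<Sum>v\<in>{v\<in>V. \<not> \<sigma> v}. w v)" using True V by (auto intro: member_le_sum)
        moreover have "?N = ?W + (\<Sum>v\<in>{v\<in>V. \<not> \<sigma> v}. w v)" by (rule sum_filter_split[OF V])
        moreover have "0 < w x" using w True by simp
        ultimately show False using WN by linarith
      qed
    next
      case False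
      thus ?thesis using \<sigma> PiE_arb[of \<sigma> V "\<lambda>_. UNIV" x] by (simp add: spins_def)
    qed
  qed
next
  assume "\<sigma> = ?\<sigma>\<^sub>0"
  hence "{v\<in>V. \<sigma> v} = V" by auto
  thus "?W = ?N" by simp
qed

lemma dilation_polynomial:
  assumes V: "finite V" and ev: "\<forall>e\<in>E. fst (ends e) \<in> V \<and> snd (ends e) \<in> V"
    and w: "\<forall>v\<in>V. 0 < w v"
  shows "\<exists>p. (\<forall>t. poly p t = Z_I V E ends bt (\<lambda>v. t ^ w v * y v))
    \<and> poly (pderiv p) 1 = (\<Sum>v\<in>V. of_nat (w v) * Z_plus V E ends bt v y)
    \<and> coeff p (\<Sum>v\<in>V. w v) = (\<Prod>v\<in>V. y v)"
proof (intro exI conjI allI)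
  have fs: "finite (spins V)" by (rule finite_spins[OF V])
  define W where "W = (\<lambda>\<sigma>. \<Sum>v\<in>{v\<in>V. \<sigma> v}. w v)"
  define c where "c = (\<lambda>\<sigma>. complex_of_real (bt ^ dcut E ends \<sigma>) * (\<Prod>v\<in>{v\<in>V. \<sigma> v}. y v))"
  define p where "p = (\<Sum>\<sigma>\<in>spins V. monom (c \<sigma>) (W \<sigma>))"
  show "poly p t = Z_I V E ends bt (\<lambda>v. t ^ w v * y v)" for t
    unfolding p_def poly_sum poly_monom Z_I_def W_def c_def
    by (intro sum.cong refl) (simp add: power_sum prod.distrib algebra_simps)
  show "poly (pderiv p) 1 = (\<Sum>v\<in>V. of_nat (w v) * Z_plus V E ends bt v y)"
    unfolding p_def pderiv_sum poly_sum pderiv_monom poly_monom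
    using sum_plus_weight_swap[OF V, of w c] by (simp add: W_def c_def Z_plus_def)
  define \<sigma>\<^sub>0 where "\<sigma>\<^sub>0 = (\<lambda>v. if v \<in> V then True else undefined)"
  have s0: "\<sigma>\<^sub>0 \<in> spins V" by (auto simp: \<sigma>\<^sub>0_def spins_def PiE_iff extensional_def)
  have "{e\<in>E. \<sigma>\<^sub>0 (fst (ends e)) \<noteq> \<sigma>\<^sub>0 (snd (ends e))} = {}" using ev by (auto simp: \<sigma>\<^sub>0_def)
  hence "dcut E ends \<sigma>\<^sub>0 = 0" by (metis card.empty dcut_def)
  moreover have "{v\<in>V. \<sigma>\<^sub>0 v} = V" by (auto simp: \<sigma>\<^sub>0_def)
  ultimately have "c \<sigma>\<^sub>0 = (\<Prod>v\<in>V. y v)" by (simp add: c_def)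
  moreover have "coeff p (\<Sum>v\<in>V. w v) = c \<sigma>\<^sub>0"
    unfolding p_def coeff_sum coeff_monom
    using total_weight_attained_iff[OF V w] s0 fs by (simp add: W_def \<sigma>\<^sub>0_def cong: if_cong)
  ultimately show "coeff p (\<Sum>v\<in>V. w v) = (\<Prod>v\<in>V. y v)" by simp
qed

text \<open>Case Z(y) <> 0.  The dilation polynomial has all its roots in the closed unit disk (a root
  t with |t| > 1 would contradict the exterior Lee-Yang theorem), positive degree, and does not
  vanish at 1, so its logarithmic derivative at 1 has positive real part.\<close>
lemma weighted_plus_sum_nonzero_if_Z_nonzero:
  assumes mg: "multigraph V E ends" and cg: "connected_graph V E ends" and bt: "0 < bt" "bt < 1"
    and w: "\<forall>v\<in>V. 0 < w v" and y: "\<forall>v\<in>V. 1 \<le> cmod (y v)"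
    and Z: "Z_I V E ends bt y \<noteq> 0"
  shows "(\<Sum>v\<in>V. of_nat (w v) * Z_plus V E ends bt v y) \<noteq> 0"
proof -
  have V: "finite V" and ev: "\<forall>e\<in>E. fst (ends e) \<in> V \<and> snd (ends e) \<in> V"
    using mg by (auto simp: multigraph_def)
  obtain u where u: "u \<in> V" using cg by (auto simp: connected_graph_def)
  obtain p where pv: "\<And>t. poly p t = Z_I V E ends bt (\<lambda>v. t ^ w v * y v)"
    and pd: "poly (pderiv p) 1 = (\<Sum>v\<in>V. of_nat (w v) * Z_plus V E ends bt v y)"
    and pc: "coeff p (\<Sum>v\<in>V. w v) = (\<Prod>v\<in>V. y v)"
    using dilation_polynomial[OF V ev w, of bt y] by blast
  have roots: "\<forall>t. poly p t = 0 \<longrightarrow> cmod t \<le> 1"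
  proof (intro allI impI)
    fix t assume pt: "poly p t = 0"
    show "cmod t \<le> 1"
    proof (rule ccontr)
      assume "\<not> cmod t \<le> 1"
      hence t: "1 < cmod t" by simp
      have "1 * 1 \<le> cmod t ^ w v * cmod (y v)" if "v \<in> V" for v
        using t y that by (intro mult_mono) (auto simp: one_le_power)
      moreover have "1 * 1 < cmod t ^ w u * cmod (y u)"
        using t w u y by (intro mult_less_le_imp_less) (auto simp: one_less_power)
      ultimately have "Z_I V E ends bt (\<lambda>v. t ^ w v * y v) \<noteq> 0"
        using u by (intro lee_yang_exterior[OF mg cg bt]) (auto simp: norm_mult norm_power)
      thus False using pt pv by simp
    qed
  qed
  have "coeff p (\<Sum>v\<in>V. w v) \<noteq> 0" using pc y V by fastforce
  moreover have "0 < (\<Sum>v\<in>V. w v)" using w V u by (intro sum_pos2[of V u]) auto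
  ultimately have "0 < degree p" using le_degree by fastforce
  hence "0 < Re (poly (pderiv p) 1 / poly p 1)"
    using logderiv_at_one_re_pos[OF refl roots] Z pv[of 1] by simp
  thus ?thesis using pd by auto
qed

lemma unimodular_if_Z_zero:
  assumes mg: "multigraph V E ends" and cg: "connected_graph V E ends" and bt: "0 < bt" "bt < 1"
    and y: "\<forall>v\<in>V. 1 \<le> cmod (y v)" and Z: "Z_I V E ends bt y = 0"
  shows "\<forall>v\<in>V. cmod (y v) = 1"
  using lee_yang_exterior[OF mg cg bt y] Z y by force

text \<open>If Z(y) = 0, doubling y_v gives Z = Z_plus(v), which is therefore nonzero.\<close>
lemma Z_plus_nonzero_if_Z_zero:
  assumes mg: "multigraph V E ends" and cg: "connected_graph V E ends" and bt: "0 < bt" "bt < 1"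
    and y: "\<forall>v\<in>V. 1 \<le> cmod (y v)" and Z: "Z_I V E ends bt y = 0" and v: "v \<in> V"
  shows "Z_plus V E ends bt v y \<noteq> 0"
proof -
  have V: "finite V" using mg by (simp add: multigraph_def)
  have y1: "\<forall>v\<in>V. cmod (y v) = 1" by (rule unimodular_if_Z_zero[OF mg cg bt y Z])
  have "Z_I V E ends bt (y(v := y v * (1 + 1))) \<noteq> 0"
    using y1 v by (intro lee_yang_exterior[OF mg cg bt _ v]) (auto simp: norm_mult)
  thus ?thesis using Z_vertex_perturbation[OF V v, of E ends bt y 1] Z by simp
qed

text \<open>Perturbing the activities of u and v by factors 1 + s, 1 + r outside the unit circle gives
  Z = Z_plus(u) s + Z_plus(v) r + K s r <> 0, so Z_plus(u) is a positive multiple of Z_plus(v).\<close>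
lemma Z_plus_positive_ratio_if_Z_zero:
  assumes mg: "multigraph V E ends" and cg: "connected_graph V E ends" and bt: "0 < bt" "bt < 1"
    and y: "\<forall>v\<in>V. 1 \<le> cmod (y v)" and Z: "Z_I V E ends bt y = 0"
    and uv: "u \<in> V" "v \<in> V" "u \<noteq> v"
  shows "\<exists>l>0. Z_plus V E ends bt u y = of_real l * Z_plus V E ends bt v y"
proof -
  have V: "finite V" using mg by (simp add: multigraph_def)
  have y1: "\<forall>v\<in>V. cmod (y v) = 1" by (rule unimodular_if_Z_zero[OF mg cg bt y Z])
  obtain K where K: "\<And>s r. Z_I V E ends bt (y(u := y u * (1 + s), v := y v * (1 + r))) =
      Z_I V E ends bt y + Z_plus V E ends bt u y * s + Z_plus V E ends bt v y * r + K * s * r"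
    using Z_two_vertex_perturbation[OF V uv, of E ends bt y] by blast
  have "\<forall>s r. 1 < cmod (1 + s) \<longrightarrow> 1 < cmod (1 + r) \<longrightarrow>
      Z_plus V E ends bt u y * s + Z_plus V E ends bt v y * r + K * s * r \<noteq> 0"
  proof (intro allI impI)
    fix s r :: complex assume s: "1 < cmod (1 + s)" and r: "1 < cmod (1 + r)"
    have "Z_I V E ends bt (y(u := y u * (1 + s), v := y v * (1 + r))) \<noteq> 0"
      using y1 uv s r by (intro lee_yang_exterior[OF mg cg bt _ uv(1)]) (auto simp: norm_mult)
    thus "Z_plus V E ends bt u y * s + Z_plus V E ends bt v y * r + K * s * r \<noteq> 0"
      unfolding K Z by simp
  qed
  thus ?thesis using positive_multiple_of_bilinear_nonvanishing
      Z_plus_nonzero_if_Z_zero[OF mg cg bt y Z uv(1)] Z_plus_nonzero_if_Z_zero[OF mg cg bt y Z uv(2)]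
    by blast
qed

lemma sum_positive_multiples_nonzero:
  fixes f :: "'a \<Rightarrow> complex"
  assumes V: "finite V" "v\<^sub>0 \<in> V" and g: "g \<noteq> 0"
    and f: "\<forall>v\<in>V. \<exists>l>0. f v = of_real l * g" and w: "\<forall>v\<in>V. 0 < w v"
  shows "(\<Sum>v\<in>V. of_nat (w v) * f v) \<noteq> 0"
proof -
  obtain L where L: "\<forall>v\<in>V. L v > 0 \<and> f v = of_real (L v) * g" using f by metis
  have "(\<Sum>v\<in>V. of_nat (w v) * f v) = of_real (\<Sum>v\<in>V. real (w v) * L v) * g"
    using L by (simp add: sum_distrib_right mult.assoc)
  moreover have "0 < (\<Sum>v\<in>V. real (w v) * L v)"
    using V w L by (intro sum_pos2[of V v\<^sub>0]) auto
  ultimately show ?thesis using g by (metis mult_eq_0_iff of_real_eq_0_iff less_irrefl)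
qed

lemma weighted_plus_sum_nonzero_if_Z_zero:
  assumes mg: "multigraph V E ends" and cg: "connected_graph V E ends" and bt: "0 < bt" "bt < 1"
    and w: "\<forall>v\<in>V. 0 < w v" and y: "\<forall>v\<in>V. 1 \<le> cmod (y v)" and Z: "Z_I V E ends bt y = 0"
  shows "(\<Sum>v\<in>V. of_nat (w v) * Z_plus V E ends bt v y) \<noteq> 0"
proof -
  have V: "finite V" using mg by (simp add: multigraph_def)
  obtain v\<^sub>0 where v\<^sub>0: "v\<^sub>0 \<in> V" using cg by (auto simp: connected_graph_def)
  have "\<forall>v\<in>V. \<exists>l>0. Z_plus V E ends bt v y = of_real l * Z_plus V E ends bt v\<^sub>0 y"
  proof
    fix v assume v: "v \<in> V"
    show "\<exists>l>0. Z_plus V E ends bt v y = of_real l * Z_plus V E ends bt v\<^sub>0 y"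
    proof (cases "v = v\<^sub>0")
      case True
      thus ?thesis by (intro exI[of _ 1]) simp
    next
      case False
      thus ?thesis by (rule Z_plus_positive_ratio_if_Z_zero[OF mg cg bt y Z v v\<^sub>0])
    qed
  qed
  thus ?thesis
    by (rule sum_positive_multiples_nonzero[OF V v\<^sub>0 Z_plus_nonzero_if_Z_zero[OF mg cg bt y Z v\<^sub>0] _ w])
qed

theorem theorem5:
  fixes V :: "'a set" and E :: "'e set" and ends :: "'e \<Rightarrow> 'a \<times> 'a"
  assumes "multigraph V E ends"
    and "connected_graph V E ends"
  shows "(\<forall>\<beta> w z. 0 < \<beta> \<and> \<beta> < 1 \<and> legal_weight V E ends w \<and> (\<forall>v\<in>V. norm (z v) \<ge> 1)
            \<longrightarrow> DG V (Z_w V E ends \<beta> w) z \<noteq> 0)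
       \<and> (\<forall>\<beta> z. 0 < \<beta> \<and> \<beta> < 1 \<and> (\<forall>v\<in>V. norm (z v) \<ge> 1)
            \<longrightarrow> DG V (Z_I V E ends \<beta>) z \<noteq> 0)"
proof -
  have V: "finite V" using assms(1) by (simp add: multigraph_def)
  have weighted: "DG V (Z_w V E ends \<beta> w) z \<noteq> 0"
    if \<beta>: "0 < \<beta>" "\<beta> < 1" and w: "\<forall>v\<in>V. 0 < w v" and z: "\<forall>v\<in>V. 1 \<le> norm (z v)" for \<beta> w z
  proof -
    have y: "\<forall>v\<in>V. 1 \<le> cmod (z v ^ w v)" using z by (simp add: norm_power one_le_power)
    show ?thesis
      unfolding DG_Z_w[OF V w]
      using weighted_plus_sum_nonzero_if_Z_nonzero[OF assms \<beta> w y]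
        weighted_plus_sum_nonzero_if_Z_zero[OF assms \<beta> w y] by blast
  qed
  show ?thesis
  proof (intro conjI allI impI)
    fix \<beta> :: real and w :: "'a \<Rightarrow> nat" and z :: "'a \<Rightarrow> complex" assume "0 < \<beta> \<and> \<beta> < 1 \<and> legal_weight V E ends w \<and> (\<forall>v\<in>V. 1 \<le> norm (z v))"
    thus "DG V (Z_w V E ends \<beta> w) z \<noteq> 0" using weighted by (auto simp: legal_weight_def)
  next
    fix \<beta> :: real and z :: "'a \<Rightarrow> complex" assume "0 < \<beta> \<and> \<beta> < 1 \<and> (\<forall>v\<in>V. 1 \<le> norm (z v))"
    thus "DG V (Z_I V E ends \<beta>) z \<noteq> 0" unfolding Z_I_eq_Z_w_one using weighted by auto
  qed
qed

end
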